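(* For any $\epsilon>0$, $\delta>0$ and $\mu>0$ there exists an initial datum $b_0$ with $\int_{-\pi}^\pi b_0(x)\,dx=0$ and $$\|b_0-\mu\cos(\cdot)\|_{C^{2-\epsilon}([-\pi,\pi])}\le\delta\mu$$ such that there is no $\tau^*>0$ and no solution $b$ on $[0,\tau^* )$ of $$\partial_\tau b+\Big(\int_{-\pi}^x b(\tau,\bar x)\,d\bar x\Big)\partial_x b-b^2+\frac1\pi\int_{-\pi}^{\pi}b^2\,dx=\frac1\pi\Big(\int_0^\tau\int_{-\pi}^{\pi}b^2(\bar\tau,x)\,dx\,d\bar\tau\Big)\,b,\qquad x\in[-\pi,\pi],$$ with $\int_{-\pi}^\pi b(\tau,x)dx=0$ and $b(0,\cdot)=b_0$, blowing up at time $\tau^*$ and decomposing as $$b(\tau,x)=\frac{1}{\tau^*-\tau}\cos(x)+\tilde b(\tau,x)\quad\text{with}\quad (\tau^*-\tau)\|\tilde b(\tau)\|_{L^\infty([-\pi,\pi])}\to0 \text{ as }\tau\to\tau^*.$$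
   Context: $C^{2-\epsilon}$ denotes the Hölder space of that order on $[-\pi,\pi]$. Solutions are required to satisfy the mean-free condition at all times. *)

theory Defs
  imports "HOL-Analysis.Analysis"
begin

text \<open>Hoelder norm on [-pi,pi] of order s > 0: write s = k + a with k a natural
number and 0 < a \<le> 1 (k = ceiling s - 1). The norm of h is
  sum_{j \<le> k} sup |h^(j)| + sup_{x \<noteq> y} |h^(k)(x) - h^(k)(y)| / |x - y|^a.
Derivatives on the closed interval are one-sided at the endpoints.
Convention: for s \<le> 0 (not a genuine Hoelder exponent) we use the sup norm (k = 0, a = 0).\<close>

definition holder_k :: "real \<Rightarrow> nat" where
  "holder_k s = (if s \<le> 0 then 0 else nat (\<lceil>s\<rceil> - 1))"

definition holder_a :: "real \<Rightarrow> real" where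
  "holder_a s = (if s \<le> 0 then 0 else s - real (holder_k s))"

definition holder_norm_le :: "real \<Rightarrow> (real \<Rightarrow> real) \<Rightarrow> real \<Rightarrow> bool" where
  "holder_norm_le s h C \<longleftrightarrow>
     (\<exists>D :: nat \<Rightarrow> real \<Rightarrow> real. \<exists>M :: nat \<Rightarrow> real. \<exists>H :: real.
        (\<forall>x\<in>{-pi..pi}. D 0 x = h x) \<and>
        (\<forall>j<holder_k s. \<forall>x\<in>{-pi..pi}.
            (D j has_real_derivative D (Suc j) x) (at x within {-pi..pi})) \<and>
        (\<forall>j\<le>holder_k s. \<forall>x\<in>{-pi..pi}. \<bar>D j x\<bar> \<le> M j) \<and>
        (s > 0 \<longrightarrow> (\<forall>x\<in>{-pi..pi}. \<forall>y\<in>{-pi..pi}.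
            \<bar>D (holder_k s) x - D (holder_k s) y\<bar> \<le> H * \<bar>x - y\<bar> powr holder_a s)) \<and>
        (\<Sum>j\<le>holder_k s. M j) + (if s > 0 then H else 0) \<le> C)"

definition is_solution :: "real \<Rightarrow> (real \<Rightarrow> real) \<Rightarrow> (real \<Rightarrow> real \<Rightarrow> real) \<Rightarrow> bool" where
  "is_solution T b0 b \<longleftrightarrow>
     (\<exists>bt bx :: real \<Rightarrow> real \<Rightarrow> real.
        continuous_on ({0..<T} \<times> {-pi..pi}) (\<lambda>(t,x). b t x) \<and>
        continuous_on ({0..<T} \<times> {-pi..pi}) (\<lambda>(t,x). bt t x) \<and>
        continuous_on ({0..<T} \<times> {-pi..pi}) (\<lambda>(t,x). bx t x) \<and>
        (\<forall>t\<in>{0..<T}. \<forall>x\<in>{-pi..pi}.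
           ((\<lambda>s. b s x) has_real_derivative bt t x) (at t within {0..<T}) \<and>
           ((\<lambda>y. b t y) has_real_derivative bx t x) (at x within {-pi..pi}) \<and>
           bt t x + integral {-pi..x} (b t) * bx t x - (b t x)\<^sup>2
             + (1/pi) * integral {-pi..pi} (\<lambda>y. (b t y)\<^sup>2)
           = (1/pi) * integral {0..t} (\<lambda>s. integral {-pi..pi} (\<lambda>y. (b s y)\<^sup>2)) * b t x) \<and>
        (\<forall>t\<in>{0..<T}. integral {-pi..pi} (b t) = 0) \<and>
        (\<forall>x\<in>{-pi..pi}. b 0 x = b0 x))"

text \<open>For the continuous functions
involved the L^infty norm is the supremum over [-pi,pi].\<close>
definition cos_blowup :: "real \<Rightarrow> (real \<Rightarrow> real \<Rightarrow> real) \<Rightarrow> bool" where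
  "cos_blowup T b \<longleftrightarrow>
     ((\<lambda>t. (T - t) * (SUP x\<in>{-pi..pi}. \<bar>b t x - cos x / (T - t)\<bar>)) \<longlongrightarrow> 0) (at_left T)"

end

theory Submission
  imports Defs
begin

text \<open>Along the characteristics of the transport field x' = int_{-pi}^x b, which vanishes at both
  endpoints because b has mean zero, the equation becomes the Riccati equation w' = riccati t w,
  whose coefficients do not depend on x. Let W solve it with W(0) = max b0;
  a comparison principle gives b \<le> W. The transport field has divergence b, so the measure of the set
  where b is close to W, which initially contains the flat top [-a, a] of b0, grows like exp (int W)
  while staying below 2 pi: hence int_0^t W \<le> ln (pi / a) as long as W exists. Writing
  W = b(t, -pi) + 1 / psi with psi solving a linear equation, either psi vanishes before T, and then
  W has a simple pole whose integral diverges, or b(t, 0) \<le> W(t) up to T, and then the cos profile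
  forces b(t, 0) \<ge> 1 / (2 (T - t)), so the integral diverges again. The datum is mu times a cosine
  with a flat top of width 2 a, shifted to mean zero; it is C^{1,1}-close to mu cos, hence
  C^{2-epsilon}-close for a small.\<close>

section \<open>Elementary real analysis\<close>

lemma has_real_derivative_glue:
  fixes f g h :: "real \<Rightarrow> real"
  assumes g: "(g has_real_derivative D) (at x)" and h: "(h has_real_derivative D) (at x)"
    and d: "d > 0"
    and fg: "\<And>y. y \<le> x \<Longrightarrow> x - d < y \<Longrightarrow> f y = g y"
    and fh: "\<And>y. x \<le> y \<Longrightarrow> y < x + d \<Longrightarrow> f y = h y"
  shows "(f has_real_derivative D) (at x)"
proof -
  have "(f has_real_derivative D) (at x within {..x})"
    by (rule has_field_derivative_transform_within[OF has_field_derivative_at_within[OF g] d])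
       (auto simp: dist_real_def fg)
  moreover have "(f has_real_derivative D) (at x within {x..})"
    by (rule has_field_derivative_transform_within[OF has_field_derivative_at_within[OF h] d])
       (auto simp: dist_real_def fh)
  ultimately have "(f has_real_derivative D) (at x within ({..x} \<union> {x..}))"
    unfolding has_field_derivative_iff Lim_within_Un by auto
  moreover have "{..x} \<union> {x..} = UNIV" by auto
  ultimately show ?thesis by simp
qed

lemma has_real_derivative_piecewise:
  fixes f gl gm gr gl' gm' gr' :: "real \<Rightarrow> real"
  assumes "p < q"
    and fl: "\<And>y. y \<le> p \<Longrightarrow> f y = gl y" and fm: "\<And>y. p \<le> y \<Longrightarrow> y \<le> q \<Longrightarrow> f y = gm y"
    and fr: "\<And>y. q \<le> y \<Longrightarrow> f y = gr y"
    and dl: "\<And>y. (gl has_real_derivative gl' y) (at y)" and dm: "\<And>y. (gm has_real_derivative gm' y) (at y)"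
    and dr: "\<And>y. (gr has_real_derivative gr' y) (at y)"
    and "gl' p = gm' p" "gm' q = gr' q"
  shows "(f has_real_derivative (if x \<le> p then gl' x else if x \<le> q then gm' x else gr' x)) (at x)"
proof -
  consider "x < p" | "x = p" | "p < x \<and> x < q" | "x = q" | "q < x" by linarith
  then show ?thesis
  proof cases
    case 1
    have "(f has_real_derivative gl' x) (at x)"
      by (rule has_field_derivative_transform_within_open[OF dl, where S="{..<p}"]) (use 1 fl in auto)
    with 1 show ?thesis by simp
  next
    case 2
    have "(f has_real_derivative gl' x) (at x)"
      by (rule has_real_derivative_glue[OF dl _ _ fl fm, where d="q - p"]) (use 2 assms in auto)
    with 2 show ?thesis by simp
  next
    case 3
    have "(f has_real_derivative gm' x) (at x)"
      by (rule has_field_derivative_transform_within_open[OF dm, where S="{p<..<q}"]) (use 3 fm in auto)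
    with 3 show ?thesis by simp
  next
    case 4
    have "(f has_real_derivative gm' x) (at x)"
      by (rule has_real_derivative_glue[OF dm _ _ fm fr, where d="q - p"]) (use 4 assms in auto)
    with 4 assms show ?thesis by simp
  next
    case 5
    have "(f has_real_derivative gr' x) (at x)"
      by (rule has_field_derivative_transform_within_open[OF dr, where S="{q<..}"]) (use 5 fr in auto)
    with 5 assms show ?thesis by simp
  qed
qed

lemma continuous_on_compose_fst:
  "continuous_on U f \<Longrightarrow> continuous_on (U \<times> V) (\<lambda>z. f (fst z))"
  by (rule continuous_on_compose2[of U f "U \<times> V" fst]) (auto intro: continuous_on_fst continuous_on_id)

lemma integrating_factor_mono:
  fixes \<Psi> G g :: "real \<Rightarrow> real"
  assumes "0 \<le> t1"
    and dG: "\<And>t. t \<in> {0..t1} \<Longrightarrow> (G has_real_derivative g t) (at t within {0..t1})"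
    and growth: "\<And>t. t \<in> {0..t1} \<Longrightarrow>
      \<exists>D. (\<Psi> has_real_derivative D) (at t within {0..t1}) \<and> g t * \<Psi> t \<le> D"
  shows "\<Psi> 0 * exp (- G 0) \<le> \<Psi> t1 * exp (- G t1)"
proof -
  let ?F = "\<lambda>t. \<Psi> t * exp (- G t)"
  have dF: "\<exists>D. (?F has_real_derivative D) (at t within {0..t1}) \<and> 0 \<le> D" if t: "t \<in> {0..t1}" for t
  proof -
    obtain D where D: "(\<Psi> has_real_derivative D) (at t within {0..t1})" "g t * \<Psi> t \<le> D"
      using growth[OF t] by blast
    have "(?F has_real_derivative (D - g t * \<Psi> t) * exp (- G t)) (at t within {0..t1})"
      by (rule derivative_eq_intros D(1) dG[OF t] | simp)+ (simp add: algebra_simps)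
    with D(2) show ?thesis by auto
  qed
  show ?thesis
  proof (rule DERIV_nonneg_imp_increasing_open[OF \<open>0 \<le> t1\<close>])
    fix t assume "0 < t" "t < t1"
    with dF[of t] at_within_Icc_at[of 0 t t1] show "\<exists>y. (?F has_real_derivative y) (at t) \<and> 0 \<le> y"
      by auto
  next
    show "continuous_on {0..t1} ?F"
      unfolding continuous_on_eq_continuous_within using dF DERIV_continuous by blast
  qed
qed

lemma has_integral_pole:
  fixes c K \<tau> t1 t2 :: real
  assumes "t2 \<le> t1" "t1 < \<tau>"
  shows "((\<lambda>s. c / (\<tau> - s) - K) has_integral (c * (ln (\<tau> - t2) - ln (\<tau> - t1)) - K * (t1 - t2))) {t2..t1}"
proof -
  have "((\<lambda>s. - c * ln (\<tau> - s) - K * s) has_real_derivative c / (\<tau> - s) - K) (at s within {t2..t1})"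
    if "s \<in> {t2..t1}" for s
    using that assms by (auto intro!: derivative_eq_intros simp: field_simps)
  then show ?thesis
    using fundamental_theorem_of_calculus[of t2 t1 "\<lambda>s. - c * ln (\<tau> - s) - K * s"] assms
    by (auto simp: has_real_derivative_iff_has_vector_derivative[symmetric] algebra_simps)
qed

lemma integral_unbounded_near_pole:
  fixes W :: "real \<Rightarrow> real"
  assumes t2: "0 \<le> t2" "t2 < \<tau>" and c: "c > 0"
    and cW: "\<And>t1. t1 \<in> {0..<\<tau>} \<Longrightarrow> continuous_on {0..t1} W"
    and lower: "\<And>s. s \<in> {t2..<\<tau>} \<Longrightarrow> c / (\<tau> - s) - K \<le> W s"
  shows "\<exists>t1\<in>{t2..<\<tau>}. integral {0..t1} W > L"
proof -
  define L' where "L' = L - integral {0..t2} W"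
  define M where "M = (\<bar>L'\<bar> + \<bar>K\<bar> * (\<tau> - t2) + 1) / c"
  define t1 where "t1 = \<tau> - (\<tau> - t2) * exp (- M)"
  have M: "M > 0" unfolding M_def using c t2 by (auto intro!: divide_pos_pos add_nonneg_pos)
  have t1: "t2 < t1" "t1 < \<tau>"
  proof -
    have "(\<tau> - t2) * exp (- M) < (\<tau> - t2) * 1" using t2 M by (intro mult_strict_left_mono) auto
    moreover have "(\<tau> - t2) * exp (- M) > 0" using t2 by auto
    ultimately show "t2 < t1" "t1 < \<tau>" unfolding t1_def by auto
  qed
  have pole: "((\<lambda>s. c / (\<tau> - s) - K) has_integral
      (c * (ln (\<tau> - t2) - ln (\<tau> - t1)) - K * (t1 - t2))) {t2..t1}"
    using t1 by (intro has_integral_pole) auto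
  have "continuous_on {t2..t1} W" using cW[of t1] t1 t2 by (auto intro: continuous_on_subset)
  then have "c * (ln (\<tau> - t2) - ln (\<tau> - t1)) - K * (t1 - t2) \<le> integral {t2..t1} W"
    by (intro has_integral_le[OF pole integrable_integral] integrable_continuous_interval)
       (use t1 lower in auto)
  moreover have "c * (ln (\<tau> - t2) - ln (\<tau> - t1)) = \<bar>L'\<bar> + \<bar>K\<bar> * (\<tau> - t2) + 1"
    using c t2 by (simp add: t1_def M_def ln_mult)
  moreover have "K * (t1 - t2) \<le> \<bar>K\<bar> * (\<tau> - t2)"
  proof -
    have "K * (t1 - t2) \<le> \<bar>K\<bar> * (t1 - t2)" using t1 by (intro mult_right_mono) auto
    also have "\<dots> \<le> \<bar>K\<bar> * (\<tau> - t2)" using t1 by (intro mult_left_mono) auto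
    finally show ?thesis .
  qed
  moreover have "integral {0..t1} W = integral {0..t2} W + integral {t2..t1} W"
    by (rule Henstock_Kurzweil_Integration.integral_combine[symmetric])
       (use t1 t2 cW[of t1] in \<open>auto intro: integrable_continuous_interval\<close>)
  ultimately have "integral {0..t1} W > L"
    unfolding L'_def by linarith
  with t1 show ?thesis by auto
qed

lemma first_zero:
  fixes f :: "real \<Rightarrow> real"
  assumes "0 \<le> t" and cf: "continuous_on {0..t} f" and f0: "f 0 > 0" and ft: "f t \<le> 0"
  obtains \<tau> where "0 < \<tau>" "\<tau> \<le> t" "f \<tau> = 0" "\<And>s. s \<in> {0..<\<tau>} \<Longrightarrow> f s > 0"
proof -
  define Z where "Z = {s \<in> {0..t}. f s = 0}"
  have zero_below: "\<exists>z\<in>Z. z \<le> s" if s: "s \<in> {0..t}" "f s \<le> 0" for s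
  proof -
    have "continuous_on {0..s} f" using cf s by (auto intro: continuous_on_subset)
    then obtain z where "0 \<le> z" "z \<le> s" "f z = 0"
      using IVT2'[of f s 0 0] s f0 by auto
    with s show ?thesis unfolding Z_def by auto
  qed
  have "closed Z"
    unfolding Z_def by (rule continuous_closed_preimage_constant[OF cf closed_atLeastAtMost])
  then have "compact ({0..t} \<inter> Z)" by (rule compact_Int_closed[OF compact_Icc])
  moreover have "{0..t} \<inter> Z = Z" by (auto simp: Z_def)
  moreover have "\<exists>z\<in>Z. z \<le> t" using zero_below[of t] \<open>0 \<le> t\<close> ft by auto
  ultimately obtain \<tau> where \<tau>: "\<tau> \<in> Z" "\<And>z. z \<in> Z \<Longrightarrow> \<tau> \<le> z"
    using compact_attains_inf[of Z] by auto
  have pos: "f s > 0" if s: "s \<in> {0..<\<tau>}" for s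
  proof (rule ccontr)
    assume "\<not> f s > 0"
    then obtain z where "z \<in> Z" "z \<le> s" using zero_below[of s] s \<tau>(1) by (auto simp: Z_def)
    with \<tau>(2)[of z] s show False by auto
  qed
  have "\<tau> \<noteq> 0" using \<tau>(1) f0 by (auto simp: Z_def)
  with \<tau>(1) pos show ?thesis by (intro that[of \<tau>]) (auto simp: Z_def)
qed

lemma continuous_nonneg_integral_eq_0_imp_0:
  fixes f :: "real \<Rightarrow> real"
  assumes "a < b" "continuous_on {a..b} f" "\<And>x. x \<in> {a..b} \<Longrightarrow> 0 \<le> f x"
    and "integral {a..b} f = 0" "x \<in> {a..b}"
  shows "f x = 0"
proof (rule has_integral_0_cbox_imp_0[where a=a and b=b and f=f])
  show "(f has_integral 0) (cbox a b)"
    using integrable_integral[OF integrable_continuous_interval[OF assms(2)]] assms(4) by simp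
qed (use assms in \<open>auto simp: box_real\<close>)

lemma continuous_on_slice:
  assumes "continuous_on (A \<times> B) (\<lambda>z. f (fst z) (snd z))" "t \<in> A"
  shows "continuous_on B (f t)"
proof -
  have "continuous_on B ((\<lambda>z. f (fst z) (snd z)) \<circ> (\<lambda>x. (t, x)))"
    by (rule continuous_on_compose[OF _ continuous_on_subset[OF assms(1)]])
       (use assms(2) in \<open>auto intro!: continuous_intros\<close>)
  then show ?thesis by (simp add: o_def)
qed

lemma le_holder_of_lipschitz_bounded:
  fixes s A L d D :: real
  assumes s: "0 < s" "s \<le> 1" and "0 \<le> d"
    and lip: "D \<le> L * d" "0 \<le> L" "L \<le> A" and bounded: "D \<le> A"
  shows "D \<le> A * d powr s"
proof (cases "d \<le> 1")
  case True
  have "d powr 1 \<le> d powr s" by (rule powr_mono') (use s \<open>0 \<le> d\<close> True in auto)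
  then have "d \<le> d powr s" using \<open>0 \<le> d\<close> by simp
  have "D \<le> L * d" by (rule lip)
  also have "\<dots> \<le> A * d" using lip \<open>0 \<le> d\<close> by (intro mult_right_mono) auto
  also have "\<dots> \<le> A * d powr s" using \<open>d \<le> d powr s\<close> lip by (intro mult_left_mono) auto
  finally show ?thesis .
next
  case False
  then have "1 \<le> d powr s" using s by (intro ge_one_powr_ge_zero) auto
  then have "A * 1 \<le> A * d powr s" using lip by (intro mult_left_mono) auto
  then show ?thesis using bounded by simp
qed

lemma le_holder_interpolation:
  fixes e a d D c :: real
  assumes e: "0 < e" "e < 1" and "0 < a" "0 \<le> d" "0 \<le> c"
    and lip: "D \<le> c * d" and bounded: "D \<le> c * a"
  shows "D \<le> c * a powr e * d powr (1 - e)"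
proof (cases "d \<le> a")
  case True
  show ?thesis
  proof (cases "d = 0")
    case False
    then have "d = d powr e * d powr (1 - e)" using \<open>0 \<le> d\<close> by (simp add: powr_add[symmetric])
    moreover have "d powr e \<le> a powr e" using True \<open>0 \<le> d\<close> e by (intro powr_mono2) auto
    ultimately have "d \<le> a powr e * d powr (1 - e)"
      by (metis mult_right_mono powr_ge_zero)
    then have "c * d \<le> c * (a powr e * d powr (1 - e))" using \<open>0 \<le> c\<close> by (intro mult_left_mono)
    then show ?thesis using lip by (simp add: mult.assoc)
  qed (use lip in simp)
next
  case False
  have "a = a powr e * a powr (1 - e)" using \<open>0 < a\<close> by (simp add: powr_add[symmetric])
  moreover have "a powr (1 - e) \<le> d powr (1 - e)" using False \<open>0 < a\<close> e by (intro powr_mono2) auto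
  ultimately have "a \<le> a powr e * d powr (1 - e)"
    by (metis mult_left_mono powr_ge_zero)
  then have "c * a \<le> c * (a powr e * d powr (1 - e))" using \<open>0 \<le> c\<close> by (intro mult_left_mono)
  then show ?thesis using bounded by (simp add: mult.assoc)
qed

lemma abs_sin_diff_le: "\<bar>sin x - sin y\<bar> \<le> \<bar>x - y\<bar>" for x y :: real
  using field_differentiable_bound[where S=UNIV and f=sin and f'=cos and B=1 and x=x and y=y]
  by (auto intro: DERIV_sin simp: abs_cos_le_one)

lemma abs_cos_diff_le: "\<bar>cos x - cos y\<bar> \<le> \<bar>x - y\<bar>" for x y :: real
  using field_differentiable_bound[where S=UNIV and f=cos and f'="\<lambda>z. - sin z" and B=1 and x=x and y=y]
  by (auto intro: DERIV_cos)

section \<open>Cutoff functions\<close>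

definition step_cutoff :: "real \<Rightarrow> real" where
  "step_cutoff s = (1 - (max (-1) (min 0 s))\<^sup>2)\<^sup>2"

definition step_cutoff' :: "real \<Rightarrow> real" where
  "step_cutoff' s = -4 * max (-1) (min 0 s) * (1 - (max (-1) (min 0 s))\<^sup>2)"

lemma step_cutoff_has_derivative: "(step_cutoff has_real_derivative step_cutoff' s) (at s)"
proof -
  have "(step_cutoff has_real_derivative (if s \<le> -1 then 0 else if s \<le> 0 then -4 * s * (1 - s\<^sup>2) else 0)) (at s)"
    by (rule has_real_derivative_piecewise[where gl="\<lambda>_. 0" and gm="\<lambda>y. (1 - y\<^sup>2)\<^sup>2" and gr="\<lambda>_. 1"])
       (auto simp: step_cutoff_def intro!: derivative_eq_intros)
  then show ?thesis by (simp add: step_cutoff'_def split: if_splits)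
qed

lemma continuous_on_step_cutoff: "continuous_on S step_cutoff"
  by (rule DERIV_continuous_on[OF has_field_derivative_at_within[OF step_cutoff_has_derivative]])

lemma continuous_on_step_cutoff': "continuous_on S step_cutoff'"
  unfolding step_cutoff'_def by (intro continuous_intros)

lemma step_cutoff_bounds: "0 \<le> step_cutoff s" "step_cutoff s \<le> 1"
proof -
  have "0 \<le> 1 - (max (-1) (min 0 s))\<^sup>2" "1 - (max (-1) (min 0 s))\<^sup>2 \<le> 1"
    by (auto simp: abs_square_le_1)
  then show "0 \<le> step_cutoff s" "step_cutoff s \<le> 1"
    unfolding step_cutoff_def by (auto simp: power_le_one)
qed

lemma step_cutoff_nonneg_arg: "0 \<le> s \<Longrightarrow> step_cutoff s = 1"
  by (simp add: step_cutoff_def)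

lemma step_cutoff_nonzero_imp_gt: "step_cutoff s \<noteq> 0 \<Longrightarrow> s > -1"
  unfolding step_cutoff_def by (cases "s \<le> -1") auto

lemma mult_step_cutoff'_nonpos: "s * step_cutoff' s \<le> 0"
proof -
  have "0 \<le> 1 - (max (-1) (min 0 s))\<^sup>2" by (auto simp: abs_square_le_1)
  moreover have "s * max (-1) (min 0 s) \<ge> 0" by (auto simp: max_def min_def zero_le_mult_iff)
  moreover have "s * step_cutoff' s =
      -4 * ((s * max (-1) (min 0 s)) * (1 - (max (-1) (min 0 s))\<^sup>2))"
    unfolding step_cutoff'_def by (simp add: algebra_simps)
  ultimately show ?thesis by (simp add: mult_nonneg_nonneg)
qed

definition pos_sq :: "real \<Rightarrow> real" where
  "pos_sq s = (max s 0)\<^sup>2"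

definition pos_sq' :: "real \<Rightarrow> real" where
  "pos_sq' s = 2 * max s 0"

lemma pos_sq_has_derivative: "(pos_sq has_real_derivative pos_sq' s) (at s)"
proof -
  have "(pos_sq has_real_derivative (if s \<le> 0 then 0 else if s \<le> 1 then 2 * s else 2 * s)) (at s)"
    by (rule has_real_derivative_piecewise[where gl="\<lambda>_. 0" and gm="\<lambda>y. y\<^sup>2" and gr="\<lambda>y. y\<^sup>2"])
       (auto simp: pos_sq_def intro!: derivative_eq_intros)
  then show ?thesis by (simp add: pos_sq'_def max_def split: if_splits)
qed

lemma continuous_on_pos_sq: "continuous_on S pos_sq"
  by (rule DERIV_continuous_on[OF has_field_derivative_at_within[OF pos_sq_has_derivative]])

lemma continuous_on_pos_sq': "continuous_on S pos_sq'"
  unfolding pos_sq'_def by (intro continuous_intros)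

lemma pos_sq_nonneg: "0 \<le> pos_sq s"
  by (simp add: pos_sq_def)

lemma pos_sq_eq_0_iff: "pos_sq s = 0 \<longleftrightarrow> s \<le> 0"
  by (simp add: pos_sq_def max_def)

lemma pos_sq'_mult: "pos_sq' s * s = 2 * pos_sq s"
  by (auto simp: pos_sq_def pos_sq'_def max_def power2_eq_square)

section \<open>Hoelder norms\<close>

lemma holder_norm_le_mono:
  assumes "holder_norm_le s h C" "C \<le> C'"
  shows "holder_norm_le s h C'"
  using assms unfolding holder_norm_le_def by (blast intro: order_trans)

lemma holder_norm_le_of_derivative_bounds_le_1:
  fixes h h' :: "real \<Rightarrow> real"
  assumes s: "s \<le> 1" and "0 \<le> a" "0 \<le> m"
    and dh: "\<And>x. (h has_real_derivative h' x) (at x)"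
    and h_le: "\<And>x. \<bar>h x\<bar> \<le> m * a" and h'_le: "\<And>x. \<bar>h' x\<bar> \<le> m * a"
  shows "holder_norm_le s h (3 * m * a)"
proof -
  have k: "holder_k s = 0" using s by (simp add: holder_k_def ceiling_le_iff)
  have holder: "\<bar>h x - h y\<bar> \<le> 2 * m * a * \<bar>x - y\<bar> powr s" if "0 < s" for x y
  proof (rule le_holder_of_lipschitz_bounded)
    show "\<bar>h x - h y\<bar> \<le> m * a * \<bar>x - y\<bar>"
      using field_differentiable_bound[where S=UNIV and f=h and f'=h'] dh h'_le by force
    show "\<bar>h x - h y\<bar> \<le> 2 * m * a" using h_le[of x] h_le[of y] by linarith
  qed (use that s \<open>0 \<le> a\<close> \<open>0 \<le> m\<close> in auto)
  show ?thesis
    unfolding holder_norm_le_def k using s h_le holder \<open>0 \<le> a\<close> \<open>0 \<le> m\<close>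
    by (intro exI[of _ "\<lambda>j. h"] exI[of _ "\<lambda>j. m * a"] exI[of _ "2 * m * a"])
       (auto simp: holder_a_def k)
qed

lemma holder_norm_le_of_derivative_bounds_gt_1:
  fixes h h' :: "real \<Rightarrow> real"
  assumes s: "1 < s" "s < 2" and a: "0 < a" and m: "0 \<le> m"
    and dh: "\<And>x. (h has_real_derivative h' x) (at x)"
    and h_le: "\<And>x. \<bar>h x\<bar> \<le> m * a" and h'_le: "\<And>x. \<bar>h' x\<bar> \<le> m * a"
    and h'_lip: "\<And>x y. \<bar>h' x - h' y\<bar> \<le> m * \<bar>x - y\<bar>"
  shows "holder_norm_le s h (2 * m * a + 2 * m * a powr (2 - s))"
proof -
  have "\<lceil>s\<rceil> = 2" using s by (simp add: ceiling_eq_iff)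
  then have k: "holder_k s = 1" using s by (simp add: holder_k_def)
  then have a': "holder_a s = 1 - (2 - s)" using s by (simp add: holder_a_def)
  have holder: "\<bar>h' x - h' y\<bar> \<le> 2 * m * a powr (2 - s) * \<bar>x - y\<bar> powr (1 - (2 - s))" for x y
  proof (rule le_holder_interpolation)
    show "\<bar>h' x - h' y\<bar> \<le> 2 * m * \<bar>x - y\<bar>" using h'_lip[of x y] m by linarith
    show "\<bar>h' x - h' y\<bar> \<le> 2 * m * a" using h'_le[of x] h'_le[of y] by linarith
  qed (use s a m in auto)
  show ?thesis
    unfolding holder_norm_le_def k a'
  proof (intro exI[of _ "\<lambda>j. if j = 0 then h else h'"] exI[of _ "\<lambda>j. m * a"]
      exI[of _ "2 * m * a powr (2 - s)"] conjI ballI allI impI)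
    show "((if j = 0 then h else h') has_real_derivative (if Suc j = 0 then h else h') x)
        (at x within {-pi..pi})" if "j < 1" for j x
      using that dh[of x] by (simp add: has_field_derivative_at_within)
    show "\<bar>(if j = 0 then h else h') x\<bar> \<le> m * a" if "j \<le> 1" for j x
      using h_le h'_le by simp
  qed (use holder s in auto)
qed

lemma holder_norm_le_of_derivative_bounds:
  fixes h h' :: "real \<Rightarrow> real"
  assumes \<epsilon>: "0 < \<epsilon>" and a: "0 < a" and m: "0 \<le> m"
    and dh: "\<And>x. (h has_real_derivative h' x) (at x)"
    and h_le: "\<And>x. \<bar>h x\<bar> \<le> m * a" and h'_le: "\<And>x. \<bar>h' x\<bar> \<le> m * a"
    and h'_lip: "\<And>x y. \<bar>h' x - h' y\<bar> \<le> m * \<bar>x - y\<bar>"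
  shows "holder_norm_le (2 - \<epsilon>) h (m * (3 * a + 2 * a powr \<epsilon>))"
proof (cases "\<epsilon> < 1")
  case True
  with assms have "holder_norm_le (2 - \<epsilon>) h (2 * m * a + 2 * m * a powr (2 - (2 - \<epsilon>)))"
    by (intro holder_norm_le_of_derivative_bounds_gt_1) auto
  then show ?thesis
    by (rule holder_norm_le_mono) (use a m in \<open>auto simp: algebra_simps\<close>)
next
  case False
  with assms have "holder_norm_le (2 - \<epsilon>) h (3 * m * a)"
    by (intro holder_norm_le_of_derivative_bounds_le_1) auto
  then show ?thesis
    by (rule holder_norm_le_mono) (use a m in \<open>auto simp: algebra_simps\<close>)
qed

section \<open>Mean-free solutions\<close>

locale mean_free_solution =
  fixes T :: real and b bt bx :: "real \<Rightarrow> real \<Rightarrow> real"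
  assumes T_pos: "T > 0"
    and continuous_b: "continuous_on ({0..<T} \<times> {-pi..pi}) (\<lambda>(t,x). b t x)"
    and continuous_bt: "continuous_on ({0..<T} \<times> {-pi..pi}) (\<lambda>(t,x). bt t x)"
    and continuous_bx: "continuous_on ({0..<T} \<times> {-pi..pi}) (\<lambda>(t,x). bx t x)"
    and has_derivative_t: "\<And>t x. t \<in> {0..<T} \<Longrightarrow> x \<in> {-pi..pi} \<Longrightarrow>
      ((\<lambda>s. b s x) has_real_derivative bt t x) (at t within {0..<T})"
    and has_derivative_x: "\<And>t x. t \<in> {0..<T} \<Longrightarrow> x \<in> {-pi..pi} \<Longrightarrow>
      ((\<lambda>y. b t y) has_real_derivative bx t x) (at x within {-pi..pi})"
    and equation: "\<And>t x. t \<in> {0..<T} \<Longrightarrow> x \<in> {-pi..pi} \<Longrightarrow>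
      bt t x + integral {-pi..x} (b t) * bx t x - (b t x)\<^sup>2
        + (1/pi) * integral {-pi..pi} (\<lambda>y. (b t y)\<^sup>2)
      = (1/pi) * integral {0..t} (\<lambda>s. integral {-pi..pi} (\<lambda>y. (b s y)\<^sup>2)) * b t x"
    and mean_free: "\<And>t. t \<in> {0..<T} \<Longrightarrow> integral {-pi..pi} (b t) = 0"
begin

definition energy :: "real \<Rightarrow> real" where
  "energy t = integral {-pi..pi} (\<lambda>y. (b t y)\<^sup>2)"

definition memory :: "real \<Rightarrow> real" where
  "memory t = integral {0..t} energy / pi"

definition riccati :: "real \<Rightarrow> real \<Rightarrow> real" where
  "riccati t w = w\<^sup>2 + memory t * w - energy t / pi"

definition primitive :: "real \<Rightarrow> real \<Rightarrow> real" where
  "primitive t x = integral {-pi..x} (b t)"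

lemma bt_eq_transport:
  assumes "t \<in> {0..<T}" "x \<in> {-pi..pi}"
  shows "bt t x = riccati t (b t x) - primitive t x * bx t x"
proof -
  have "bt t x = (1/pi) * integral {0..t} (\<lambda>s. integral {-pi..pi} (\<lambda>y. (b s y)\<^sup>2)) * b t x + (b t x)\<^sup>2
      - (1/pi) * integral {-pi..pi} (\<lambda>y. (b t y)\<^sup>2) - integral {-pi..x} (b t) * bx t x"
    using equation[OF assms] by linarith
  then show ?thesis by (simp add: riccati_def memory_def primitive_def energy_def[abs_def])
qed

lemmas continuous_b' = continuous_b[unfolded case_prod_beta']
lemmas continuous_bt' = continuous_bt[unfolded case_prod_beta']
lemmas continuous_bx' = continuous_bx[unfolded case_prod_beta']

lemma continuous_on_b: "t \<in> {0..<T} \<Longrightarrow> continuous_on {-pi..pi} (b t)"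
  by (rule continuous_on_slice[OF continuous_b'])

lemma continuous_on_bx: "t \<in> {0..<T} \<Longrightarrow> continuous_on {-pi..pi} (bx t)"
  by (rule continuous_on_slice[OF continuous_bx'])

lemma primitive_has_derivative:
  "t \<in> {0..<T} \<Longrightarrow> x \<in> {-pi..pi} \<Longrightarrow>
    (primitive t has_real_derivative b t x) (at x within {-pi..pi})"
  unfolding primitive_def by (rule integral_has_real_derivative[OF continuous_on_b])

lemma primitive_endpoints: "t \<in> {0..<T} \<Longrightarrow> primitive t (-pi) = 0 \<and> primitive t pi = 0"
  using mean_free by (simp add: primitive_def)

lemma continuous_on_primitive: "t \<in> {0..<T} \<Longrightarrow> continuous_on {-pi..pi} (primitive t)"
  by (rule DERIV_continuous_on[OF primitive_has_derivative])

lemma integral_mult_primitive: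
  assumes t: "t \<in> {0..<T}"
    and dG: "\<And>x. x \<in> {-pi..pi} \<Longrightarrow> (G has_real_derivative G' x) (at x within {-pi..pi})"
    and cG': "continuous_on {-pi..pi} G'"
  shows "integral {-pi..pi} (\<lambda>x. G' x * primitive t x) = - integral {-pi..pi} (\<lambda>x. b t x * G x)"
proof -
  have cG: "continuous_on {-pi..pi} G" by (rule DERIV_continuous_on[OF dG])
  have "((\<lambda>x. primitive t x * G x) has_real_derivative b t x * G x + primitive t x * G' x)
      (at x within {-pi..pi})" if "x \<in> {-pi..pi}" for x
    using DERIV_mult[OF primitive_has_derivative[OF t that] dG[OF that]] by (simp add: algebra_simps)
  then have "((\<lambda>x. b t x * G x + primitive t x * G' x) has_integral
      (primitive t pi * G pi - primitive t (-pi) * G (-pi))) {-pi..pi}"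
    by (intro fundamental_theorem_of_calculus) (auto simp: has_real_derivative_iff_has_vector_derivative[symmetric])
  then have "integral {-pi..pi} (\<lambda>x. b t x * G x + primitive t x * G' x) = 0"
    using primitive_endpoints[OF t] by (simp add: integral_unique)
  moreover have "integral {-pi..pi} (\<lambda>x. b t x * G x + primitive t x * G' x) =
      integral {-pi..pi} (\<lambda>x. b t x * G x) + integral {-pi..pi} (\<lambda>x. G' x * primitive t x)"
    using continuous_on_b[OF t] cG cG' continuous_on_primitive[OF t]
    by (subst integral_add) (auto intro!: integrable_continuous_interval continuous_intros simp: mult.commute)
  ultimately show ?thesis by linarith
qed

lemma has_derivative_integral_comp:
  assumes t1: "0 \<le> t1" "t1 < T" and t: "t \<in> {0..t1}"
    and dP: "\<And>s. (P has_real_derivative P' s) (at s)" and cP': "continuous_on UNIV P'"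
    and dA: "\<And>t. t \<in> {0..t1} \<Longrightarrow> (A has_real_derivative A' t) (at t within {0..t1})"
    and cA': "continuous_on {0..t1} A'"
    and dW: "\<And>t. t \<in> {0..t1} \<Longrightarrow> (W has_real_derivative W' t) (at t within {0..t1})"
    and cW': "continuous_on {0..t1} W'"
  shows "((\<lambda>s. integral {-pi..pi} (\<lambda>x. P (A s * (b s x - W s)))) has_real_derivative
    integral {-pi..pi} (\<lambda>x. P' (A t * (b t x - W t)) * (A' t * (b t x - W t) + A t * (bt t x - W' t))))
    (at t within {0..t1})"
proof -
  have sub: "{0..t1} \<subseteq> {0..<T}" using t1 by auto
  have cP: "continuous_on UNIV P" by (rule DERIV_continuous_on[OF has_field_derivative_at_within[OF dP]])
  let ?S = "{0..t1} \<times> {-pi..pi}"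
  have c1: "continuous_on ?S (\<lambda>z. A (fst z))" "continuous_on ?S (\<lambda>z. A' (fst z))"
    "continuous_on ?S (\<lambda>z. W (fst z))" "continuous_on ?S (\<lambda>z. W' (fst z))"
    using DERIV_continuous_on[OF dA] cA' DERIV_continuous_on[OF dW] cW' by (auto intro: continuous_on_compose_fst)
  have c2: "continuous_on ?S (\<lambda>z. b (fst z) (snd z))" "continuous_on ?S (\<lambda>z. bt (fst z) (snd z))"
    using sub by (auto intro: continuous_on_subset[OF continuous_b'] continuous_on_subset[OF continuous_bt'])
  have cF: "continuous_on ?S (\<lambda>z. P' (A (fst z) * (b (fst z) (snd z) - W (fst z))) *
      (A' (fst z) * (b (fst z) (snd z) - W (fst z)) + A (fst z) * (bt (fst z) (snd z) - W' (fst z))))"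
    by (intro continuous_intros continuous_on_compose2[OF cP', of _ "\<lambda>z. A (fst z) * (b (fst z) (snd z) - W (fst z))"] c1 c2)
       auto
  have "((\<lambda>s. integral (cbox (-pi) pi) (\<lambda>x. P (A s * (b s x - W s)))) has_real_derivative
      integral (cbox (-pi) pi) (\<lambda>x. P' (A t * (b t x - W t)) * (A' t * (b t x - W t) + A t * (bt t x - W' t))))
      (at t within {0..t1})"
  proof (intro leibniz_rule_field_derivative[where fx = "\<lambda>s x. P' (A s * (b s x - W s)) *
      (A' s * (b s x - W s) + A s * (bt s x - W' s))"])
    fix s x assume s: "s \<in> {0..t1}" and x: "x \<in> cbox (-pi) pi"
    have db: "((\<lambda>s. b s x) has_real_derivative bt s x) (at s within {0..t1})"
      using DERIV_subset[OF has_derivative_t[of s x] sub] s x sub by auto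
    show "((\<lambda>s. P (A s * (b s x - W s))) has_real_derivative
        P' (A s * (b s x - W s)) * (A' s * (b s x - W s) + A s * (bt s x - W' s))) (at s within {0..t1})"
      by (rule derivative_eq_intros DERIV_chain2[OF dP] dA[OF s] dW[OF s] db | simp)+
  next
    fix s assume s: "s \<in> {0..t1}"
    have "continuous_on {-pi..pi} (\<lambda>x. P (A s * (b s x - W s)))"
      using continuous_on_b[of s] s sub
      by (intro continuous_intros continuous_on_compose2[OF cP, of _ "\<lambda>x. A s * (b s x - W s)"]) auto
    then show "(\<lambda>x. P (A s * (b s x - W s))) integrable_on cbox (-pi) pi"
      by (simp add: integrable_continuous_interval)
  qed (use t cF in \<open>auto simp: case_prod_beta'\<close>)
  then show ?thesis by simp
qed

text \<open>The transport term drops out after an integration by parts against the primitive of b,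
  leaving the divergence term b P.\<close>

lemma has_derivative_integral_comp_transport:
  assumes t1: "0 \<le> t1" "t1 < T" and t: "t \<in> {0..t1}"
    and dP: "\<And>s. (P has_real_derivative P' s) (at s)" and cP': "continuous_on UNIV P'"
    and dA: "\<And>t. t \<in> {0..t1} \<Longrightarrow> (A has_real_derivative A' t) (at t within {0..t1})"
    and cA': "continuous_on {0..t1} A'"
    and dW: "\<And>t. t \<in> {0..t1} \<Longrightarrow> (W has_real_derivative W' t) (at t within {0..t1})"
    and cW': "continuous_on {0..t1} W'"
  shows "((\<lambda>s. integral {-pi..pi} (\<lambda>x. P (A s * (b s x - W s)))) has_real_derivative
    integral {-pi..pi} (\<lambda>x. b t x * P (A t * (b t x - W t)) +
      P' (A t * (b t x - W t)) * (A' t * (b t x - W t) + A t * (riccati t (b t x) - W' t))))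
    (at t within {0..t1})"
proof -
  have t': "t \<in> {0..<T}" using t t1 by auto
  have cP: "continuous_on UNIV P" by (rule DERIV_continuous_on[OF has_field_derivative_at_within[OF dP]])
  have cb: "continuous_on {-pi..pi} (b t)" "continuous_on {-pi..pi} (bx t)"
    using continuous_on_b[OF t'] continuous_on_bx[OF t'] by auto
  have cP'b: "continuous_on {-pi..pi} (\<lambda>x. P' (A t * (b t x - W t)))"
    using cb by (intro continuous_intros continuous_on_compose2[OF cP', of _ "\<lambda>x. A t * (b t x - W t)"]) auto
  have cPb: "continuous_on {-pi..pi} (\<lambda>x. P (A t * (b t x - W t)))"
    using cb by (intro continuous_intros continuous_on_compose2[OF cP, of _ "\<lambda>x. A t * (b t x - W t)"]) auto
  have cR: "continuous_on {-pi..pi} (\<lambda>x. riccati t (b t x))"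
    unfolding riccati_def using cb by (intro continuous_intros) auto
  let ?G = "\<lambda>x. P (A t * (b t x - W t))"
  let ?G' = "\<lambda>x. P' (A t * (b t x - W t)) * (A t * bx t x)"
  let ?F = "\<lambda>x. P' (A t * (b t x - W t)) * (A' t * (b t x - W t) + A t * (riccati t (b t x) - W' t))"
  have "(?G has_real_derivative ?G' x) (at x within {-pi..pi})" if "x \<in> {-pi..pi}" for x
    by (rule derivative_eq_intros DERIV_chain2[OF dP] has_derivative_x[OF t' that] | simp)+
  then have by_parts: "integral {-pi..pi} (\<lambda>x. ?G' x * primitive t x) = - integral {-pi..pi} (\<lambda>x. b t x * ?G x)"
    by (rule integral_mult_primitive[OF t']) (use cP'b cb in \<open>auto intro!: continuous_intros\<close>)
  have "integral {-pi..pi} (\<lambda>x. P' (A t * (b t x - W t)) * (A' t * (b t x - W t) + A t * (bt t x - W' t)))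
      = integral {-pi..pi} (\<lambda>x. ?F x - ?G' x * primitive t x)"
    by (rule integral_cong) (simp add: bt_eq_transport[OF t'] algebra_simps)
  also have "\<dots> = integral {-pi..pi} ?F - integral {-pi..pi} (\<lambda>x. ?G' x * primitive t x)"
    by (rule integral_diff) (use cP'b cb cR continuous_on_primitive[OF t'] in
        \<open>auto intro!: integrable_continuous_interval continuous_intros\<close>)
  also have "\<dots> = integral {-pi..pi} (\<lambda>x. b t x * ?G x + ?F x)"
    unfolding by_parts
    by (subst integral_add) (use cP'b cb cR cPb in \<open>auto intro!: integrable_continuous_interval continuous_intros\<close>)
  finally show ?thesis using has_derivative_integral_comp[OF t1 t dP cP' dA cA' dW cW'] by simp
qed

lemma continuous_on_energy:
  assumes "0 \<le> t1" "t1 < T"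
  shows "continuous_on {0..t1} energy"
proof (rule DERIV_continuous_on)
  fix t assume t: "t \<in> {0..t1}"
  have "((\<lambda>s. integral {-pi..pi} (\<lambda>x. (1 * (b s x - 0))\<^sup>2)) has_real_derivative
      integral {-pi..pi} (\<lambda>x. 2 * (1 * (b t x - 0)) * (0 * (b t x - 0) + 1 * (bt t x - 0))))
      (at t within {0..t1})"
  proof (rule has_derivative_integral_comp[OF assms t, where P="\<lambda>s. s\<^sup>2" and P'="\<lambda>s. 2 * s"
        and A="\<lambda>_. 1" and A'="\<lambda>_. 0" and W="\<lambda>_. 0" and W'="\<lambda>_. 0"])
    show "((\<lambda>s. s\<^sup>2) has_real_derivative 2 * s) (at s)" for s :: real
      by (rule derivative_eq_intros | simp)+
  qed (auto intro: continuous_intros)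
  then show "(energy has_real_derivative integral {-pi..pi} (\<lambda>x. 2 * b t x * bt t x)) (at t within {0..t1})"
    by (simp add: energy_def[abs_def])
qed

lemma memory_has_derivative:
  assumes "0 \<le> t1" "t1 < T" "t \<in> {0..t1}"
  shows "(memory has_real_derivative energy t / pi) (at t within {0..t1})"
  unfolding memory_def[abs_def]
  using integral_has_real_derivative[OF continuous_on_energy[OF assms(1,2)] assms(3)] by (rule DERIV_cdivide)

lemma continuous_on_memory: "0 \<le> t1 \<Longrightarrow> t1 < T \<Longrightarrow> continuous_on {0..t1} memory"
  by (rule DERIV_continuous_on[OF memory_has_derivative])

lemma continuous_on_riccati:
  assumes "0 \<le> t1" "t1 < T" "continuous_on {0..t1} W"
  shows "continuous_on {0..t1} (\<lambda>t. riccati t (W t))"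
  unfolding riccati_def using assms continuous_on_memory continuous_on_energy by (intro continuous_intros) auto

lemma bounded_on_slab:
  assumes "0 \<le> t1" "t1 < T" "continuous_on {0..t1} W"
  obtains C where "\<And>t x. t \<in> {0..t1} \<Longrightarrow> x \<in> {-pi..pi} \<Longrightarrow> \<bar>b t x\<bar> + \<bar>W t\<bar> + \<bar>memory t\<bar> \<le> C"
proof -
  let ?S = "{0..t1} \<times> {-pi..pi}"
  have "{0..t1} \<subseteq> {0..<T}" using assms by auto
  then have "continuous_on ?S (\<lambda>z. \<bar>b (fst z) (snd z)\<bar> + \<bar>W (fst z)\<bar> + \<bar>memory (fst z)\<bar>)"
    using continuous_on_subset[OF continuous_b', of ?S] continuous_on_compose_fst[OF assms(3)]
      continuous_on_compose_fst[OF continuous_on_memory[OF assms(1,2)]]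
    by (intro continuous_intros) auto
  then obtain C where C: "\<And>z. z \<in> ?S \<Longrightarrow> norm (\<bar>b (fst z) (snd z)\<bar> + \<bar>W (fst z)\<bar> + \<bar>memory (fst z)\<bar>) \<le> C"
    using continuous_on_compact_bound[OF compact_Times[OF compact_Icc compact_Icc]] by blast
  show ?thesis
  proof (rule that)
    fix t x assume "t \<in> {0..t1}" "x \<in> {-pi..pi}"
    then show "\<bar>b t x\<bar> + \<bar>W t\<bar> + \<bar>memory t\<bar> \<le> C" using C[of "(t, x)"] by simp
  qed
qed

definition b_left :: "real \<Rightarrow> real" where
  "b_left t = b t (-pi)"

definition psi_exponent :: "real \<Rightarrow> real" where
  "psi_exponent t = integral {0..t} (\<lambda>s. 2 * b_left s + memory s)"

text \<open>The substitution w = b_left + 1 / psi linearises the Riccati equation around its solution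
  b_left, so riccati_sol c is the Riccati solution with initial value b_left 0 + 1 / c, up to the
  first zero of psi c.\<close>

definition psi :: "real \<Rightarrow> real \<Rightarrow> real" where
  "psi c t = exp (- psi_exponent t) * (c - integral {0..t} (\<lambda>s. exp (psi_exponent s)))"

definition riccati_sol :: "real \<Rightarrow> real \<Rightarrow> real" where
  "riccati_sol c t = b_left t + 1 / psi c t"

lemma b_left_has_derivative:
  assumes t1: "0 \<le> t1" "t1 < T" and t: "t \<in> {0..t1}"
  shows "(b_left has_real_derivative riccati t (b_left t)) (at t within {0..t1})"
proof -
  have t': "t \<in> {0..<T}" using t t1 by auto
  have "bt t (-pi) = riccati t (b_left t)"
    using bt_eq_transport[OF t', of "-pi"] primitive_endpoints[OF t'] by (simp add: b_left_def)
  moreover have "((\<lambda>s. b s (-pi)) has_real_derivative bt t (-pi)) (at t within {0..t1})"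
    by (rule DERIV_subset[OF has_derivative_t[OF t']]) (use t1 in auto)
  ultimately show ?thesis by (simp add: b_left_def[abs_def])
qed

lemma continuous_on_b_left: "0 \<le> t1 \<Longrightarrow> t1 < T \<Longrightarrow> continuous_on {0..t1} b_left"
  by (rule DERIV_continuous_on[OF b_left_has_derivative])

lemma psi_exponent_has_derivative:
  assumes "0 \<le> t1" "t1 < T" "t \<in> {0..t1}"
  shows "(psi_exponent has_real_derivative 2 * b_left t + memory t) (at t within {0..t1})"
  unfolding psi_exponent_def[abs_def] using assms continuous_on_b_left continuous_on_memory
  by (intro integral_has_real_derivative continuous_intros) auto

lemma psi_has_derivative:
  assumes t1: "0 \<le> t1" "t1 < T" and t: "t \<in> {0..t1}"
  shows "(psi c has_real_derivative - (2 * b_left t + memory t) * psi c t - 1) (at t within {0..t1})"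
proof -
  have "continuous_on {0..t1} (\<lambda>s. exp (psi_exponent s))"
    using DERIV_continuous_on[OF psi_exponent_has_derivative[OF t1]] by (intro continuous_intros)
  from integral_has_real_derivative[OF this t]
  have dQ: "((\<lambda>t. integral {0..t} (\<lambda>s. exp (psi_exponent s))) has_real_derivative exp (psi_exponent t))
      (at t within {0..t1})" .
  show ?thesis
    unfolding psi_def[abs_def]
    by (rule derivative_eq_intros psi_exponent_has_derivative[OF t1 t] dQ | simp)+
       (simp add: algebra_simps exp_minus field_simps)
qed

lemma continuous_on_psi: "0 \<le> t1 \<Longrightarrow> t1 < T \<Longrightarrow> continuous_on {0..t1} (psi c)"
  by (rule DERIV_continuous_on[OF psi_has_derivative])

lemma psi_0: "psi c 0 = c"
  by (simp add: psi_def psi_exponent_def)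

lemma riccati_sol_0: "riccati_sol c 0 = b 0 (-pi) + 1 / c"
  by (simp add: riccati_sol_def psi_0 b_left_def)

lemma riccati_sol_has_derivative:
  assumes t1: "0 \<le> t1" "t1 < T" and t: "t \<in> {0..t1}" and nz: "psi c t \<noteq> 0"
  shows "(riccati_sol c has_real_derivative riccati t (riccati_sol c t)) (at t within {0..t1})"
proof -
  have "(riccati_sol c has_real_derivative
      riccati t (b_left t) - (- (2 * b_left t + memory t) * psi c t - 1) / (psi c t)\<^sup>2) (at t within {0..t1})"
    unfolding riccati_sol_def[abs_def]
    by (rule derivative_eq_intros b_left_has_derivative[OF t1 t] psi_has_derivative[OF t1 t] | simp add: nz)+
       (use nz in \<open>simp add: power2_eq_square field_simps\<close>)
  moreover have "riccati t (b_left t) - (- (2 * b_left t + memory t) * psi c t - 1) / (psi c t)\<^sup>2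
      = riccati t (riccati_sol c t)"
    unfolding riccati_def riccati_sol_def using nz by (simp add: field_simps power2_eq_square)
  ultimately show ?thesis by simp
qed

lemma continuous_on_riccati_sol:
  "0 \<le> t1 \<Longrightarrow> t1 < T \<Longrightarrow> \<forall>s\<in>{0..t1}. psi c s \<noteq> 0 \<Longrightarrow> continuous_on {0..t1} (riccati_sol c)"
  by (rule DERIV_continuous_on[OF riccati_sol_has_derivative]) auto

lemma pos_sq_integral_has_derivative:
  assumes t1: "0 \<le> t1" "t1 < T" and t: "t \<in> {0..t1}"
    and dW: "\<And>t. t \<in> {0..t1} \<Longrightarrow> (W has_real_derivative riccati t (W t)) (at t within {0..t1})"
  shows "((\<lambda>s. integral {-pi..pi} (\<lambda>x. pos_sq (b s x - W s))) has_real_derivative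
    integral {-pi..pi} (\<lambda>x. pos_sq (b t x - W t) * (3 * b t x + 2 * W t + 2 * memory t)))
    (at t within {0..t1})"
proof -
  have cW: "continuous_on {0..t1} W" by (rule DERIV_continuous_on[OF dW])
  have "((\<lambda>s. integral {-pi..pi} (\<lambda>x. pos_sq (1 * (b s x - W s)))) has_real_derivative
      integral {-pi..pi} (\<lambda>x. b t x * pos_sq (1 * (b t x - W t)) + pos_sq' (1 * (b t x - W t)) *
        (0 * (b t x - W t) + 1 * (riccati t (b t x) - riccati t (W t))))) (at t within {0..t1})"
    by (rule has_derivative_integral_comp_transport[OF t1 t pos_sq_has_derivative continuous_on_pos_sq'
          _ _ dW continuous_on_riccati[OF t1 cW], where A="\<lambda>_. 1" and A'="\<lambda>_. 0"]) auto
  moreover have "b t x * pos_sq (b t x - W t) + pos_sq' (b t x - W t) * (riccati t (b t x) - riccati t (W t))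
      = pos_sq (b t x - W t) * (3 * b t x + 2 * W t + 2 * memory t)" for x
  proof -
    have "riccati t (b t x) - riccati t (W t) = (b t x - W t) * (b t x + W t + memory t)"
      unfolding riccati_def by (simp add: algebra_simps power2_eq_square)
    then have "pos_sq' (b t x - W t) * (riccati t (b t x) - riccati t (W t))
        = 2 * pos_sq (b t x - W t) * (b t x + W t + memory t)"
      using pos_sq'_mult[of "b t x - W t"] by (simp add: mult.assoc[symmetric])
    then show ?thesis by (simp add: algebra_simps)
  qed
  ultimately show ?thesis by simp
qed

lemma pos_sq_integral_growth:
  assumes t1: "0 \<le> t1" "t1 < T" and t: "t \<in> {0..t1}"
    and dW: "\<And>t. t \<in> {0..t1} \<Longrightarrow> (W has_real_derivative riccati t (W t)) (at t within {0..t1})"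
    and K: "\<And>x. x \<in> {-pi..pi} \<Longrightarrow> 3 * b t x + 2 * W t + 2 * memory t \<le> K"
  shows "\<exists>D. ((\<lambda>s. - integral {-pi..pi} (\<lambda>x. pos_sq (b s x - W s))) has_real_derivative D) (at t within {0..t1})
    \<and> K * (- integral {-pi..pi} (\<lambda>x. pos_sq (b t x - W t))) \<le> D"
proof (intro exI conjI)
  show "((\<lambda>s. - integral {-pi..pi} (\<lambda>x. pos_sq (b s x - W s))) has_real_derivative
      - integral {-pi..pi} (\<lambda>x. pos_sq (b t x - W t) * (3 * b t x + 2 * W t + 2 * memory t)))
      (at t within {0..t1})"
    by (rule DERIV_minus[OF pos_sq_integral_has_derivative[OF t1 t dW]])
  have "continuous_on {-pi..pi} (b t)" using continuous_on_b[of t] t t1 by auto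
  then have "integral {-pi..pi} (\<lambda>x. pos_sq (b t x - W t) * (3 * b t x + 2 * W t + 2 * memory t))
      \<le> integral {-pi..pi} (\<lambda>x. pos_sq (b t x - W t) * K)"
    using K pos_sq_nonneg
    by (intro integral_le mult_left_mono)
       (auto intro!: integrable_continuous_interval continuous_intros
         continuous_on_compose2[OF continuous_on_pos_sq[of UNIV]])
  then show "K * (- integral {-pi..pi} (\<lambda>x. pos_sq (b t x - W t))) \<le>
      - integral {-pi..pi} (\<lambda>x. pos_sq (b t x - W t) * (3 * b t x + 2 * W t + 2 * memory t))"
    by (simp add: algebra_simps)
qed

lemma comparison_principle:
  assumes t1: "0 \<le> t1" "t1 < T"
    and dW: "\<And>t. t \<in> {0..t1} \<Longrightarrow> (W has_real_derivative riccati t (W t)) (at t within {0..t1})"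
    and init: "\<And>x. x \<in> {-pi..pi} \<Longrightarrow> b 0 x \<le> W 0"
    and x: "x \<in> {-pi..pi}"
  shows "b t1 x \<le> W t1"
proof -
  obtain C where C: "\<And>t x. t \<in> {0..t1} \<Longrightarrow> x \<in> {-pi..pi} \<Longrightarrow> \<bar>b t x\<bar> + \<bar>W t\<bar> + \<bar>memory t\<bar> \<le> C"
    using bounded_on_slab[OF t1 DERIV_continuous_on[OF dW]] by blast
  have cpos: "continuous_on {-pi..pi} (\<lambda>x. pos_sq (b t x - W t))" if "t \<in> {0..t1}" for t
    using continuous_on_b[of t] that t1
    by (intro continuous_on_compose2[OF continuous_on_pos_sq[of UNIV]] continuous_intros) auto
  define \<Psi> where "\<Psi> t = integral {-pi..pi} (\<lambda>x. pos_sq (b t x - W t))" for t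
  have "- \<Psi> 0 * exp (- (3 * C * 0)) \<le> - \<Psi> t1 * exp (- (3 * C * t1))"
    unfolding \<Psi>_def
  proof (rule integrating_factor_mono[OF t1(1) _ pos_sq_integral_growth[OF t1 _ dW]])
    show "3 * b t x + 2 * W t + 2 * memory t \<le> 3 * C" if "t \<in> {0..t1}" "x \<in> {-pi..pi}" for t x
      using C[OF that] abs_ge_self[of "b t x"] abs_ge_self[of "W t"] abs_ge_self[of "memory t"] by linarith
  qed (auto intro!: derivative_eq_intros)
  moreover have "\<Psi> 0 = 0"
  proof -
    have "\<Psi> 0 = integral {-pi..pi} (\<lambda>x. 0)"
      unfolding \<Psi>_def using init by (intro integral_cong) (simp add: pos_sq_eq_0_iff)
    then show ?thesis by simp
  qed
  moreover have "\<Psi> t1 \<ge> 0"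
    unfolding \<Psi>_def using cpos[of t1] t1 pos_sq_nonneg
    by (intro integral_nonneg integrable_continuous_interval) auto
  ultimately have zero: "integral {-pi..pi} (\<lambda>x. pos_sq (b t1 x - W t1)) = 0"
    unfolding \<Psi>_def by (simp add: mult_le_0_iff)
  have "pos_sq (b t1 x - W t1) = 0"
    by (rule continuous_nonneg_integral_eq_0_imp_0[OF _ cpos[of t1] _ zero x]) (use t1 pos_sq_nonneg in auto)
  then show ?thesis by (simp add: pos_sq_eq_0_iff)
qed

lemma step_cutoff_transport_ge:
  assumes C: "v + w + memory t \<le> C" and \<alpha>: "0 < \<alpha>" "1 / \<alpha> \<le> e"
  shows "(w - e) * step_cutoff (\<alpha> * (v - w)) \<le>
    v * step_cutoff (\<alpha> * (v - w)) + step_cutoff' (\<alpha> * (v - w)) * (- C * \<alpha> * (v - w) + \<alpha> * (riccati t v - riccati t w))"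
proof -
  let ?z = "\<alpha> * (v - w)"
  have R: "riccati t v - riccati t w = (v - w) * (v + w + memory t)"
    unfolding riccati_def by (simp add: algebra_simps power2_eq_square)
  have "step_cutoff' ?z * (- C * \<alpha> * (v - w) + \<alpha> * (riccati t v - riccati t w))
      = (?z * step_cutoff' ?z) * (v + w + memory t - C)"
    unfolding R by (simp add: algebra_simps)
  also have "\<dots> \<ge> 0"
    using mult_step_cutoff'_nonpos[of ?z] C by (intro mult_nonpos_nonpos) auto
  finally have transport: "0 \<le> step_cutoff' ?z * (- C * \<alpha> * (v - w) + \<alpha> * (riccati t v - riccati t w))" .
  have "(w - e) * step_cutoff ?z \<le> v * step_cutoff ?z"
  proof (cases "step_cutoff ?z = 0")
    case False
    then have "?z > -1" by (rule step_cutoff_nonzero_imp_gt)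
    then have "v - w > - 1 / \<alpha>" using \<alpha> by (simp add: field_simps)
    then show ?thesis using \<alpha> step_cutoff_bounds(1)[of ?z] by (intro mult_right_mono) auto
  qed simp
  with transport show ?thesis by linarith
qed

text \<open>soft_measure alpha W t measures, softly, the set where b t is within 1 / alpha t of W t.
  Since the transport field has divergence b, it grows at least at rate W - e.\<close>

definition soft_measure :: "(real \<Rightarrow> real) \<Rightarrow> (real \<Rightarrow> real) \<Rightarrow> real \<Rightarrow> real" where
  "soft_measure \<alpha> W t = integral {-pi..pi} (\<lambda>x. step_cutoff (\<alpha> t * (b t x - W t)))"

lemma soft_measure_growth:
  assumes t1: "0 \<le> t1" "t1 < T" and t: "t \<in> {0..t1}"
    and dW: "\<And>t. t \<in> {0..t1} \<Longrightarrow> (W has_real_derivative riccati t (W t)) (at t within {0..t1})"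
    and C: "\<And>x. x \<in> {-pi..pi} \<Longrightarrow> b t x + W t + memory t \<le> C"
    and d\<alpha>: "\<And>t. (\<alpha> has_real_derivative - C * \<alpha> t) (at t within {0..t1})"
    and \<alpha>: "0 < \<alpha> t" "1 / \<alpha> t \<le> e"
  shows "\<exists>D. (soft_measure \<alpha> W has_real_derivative D) (at t within {0..t1}) \<and> (W t - e) * soft_measure \<alpha> W t \<le> D"
proof (intro exI conjI)
  have cW: "continuous_on {0..t1} W" by (rule DERIV_continuous_on[OF dW])
  have cb: "continuous_on {-pi..pi} (b t)" using continuous_on_b[of t] t t1 by auto
  show "(soft_measure \<alpha> W has_real_derivative integral {-pi..pi} (\<lambda>x. b t x * step_cutoff (\<alpha> t * (b t x - W t)) +
      step_cutoff' (\<alpha> t * (b t x - W t)) * (- C * \<alpha> t * (b t x - W t) + \<alpha> t * (riccati t (b t x) - riccati t (W t)))))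
      (at t within {0..t1})"
    unfolding soft_measure_def[abs_def]
    by (rule has_derivative_integral_comp_transport[OF t1 t step_cutoff_has_derivative continuous_on_step_cutoff'
          d\<alpha> _ dW continuous_on_riccati[OF t1 cW]])
       (use DERIV_continuous_on[OF d\<alpha>] in \<open>auto intro!: continuous_intros\<close>)
  have "(W t - e) * soft_measure \<alpha> W t = integral {-pi..pi} (\<lambda>x. (W t - e) * step_cutoff (\<alpha> t * (b t x - W t)))"
    unfolding soft_measure_def by simp
  also have "\<dots> \<le> integral {-pi..pi} (\<lambda>x. b t x * step_cutoff (\<alpha> t * (b t x - W t)) +
      step_cutoff' (\<alpha> t * (b t x - W t)) * (- C * \<alpha> t * (b t x - W t) + \<alpha> t * (riccati t (b t x) - riccati t (W t))))"
  proof (rule integral_le)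
    have "continuous_on {-pi..pi} (\<lambda>x. step_cutoff (\<alpha> t * (b t x - W t)))"
      "continuous_on {-pi..pi} (\<lambda>x. step_cutoff' (\<alpha> t * (b t x - W t)))"
      using cb by (auto intro!: continuous_intros continuous_on_compose2[OF continuous_on_step_cutoff[of UNIV]]
          continuous_on_compose2[OF continuous_on_step_cutoff'[of UNIV]])
    with cb show "(\<lambda>x. (W t - e) * step_cutoff (\<alpha> t * (b t x - W t))) integrable_on {-pi..pi}"
      "(\<lambda>x. b t x * step_cutoff (\<alpha> t * (b t x - W t)) + step_cutoff' (\<alpha> t * (b t x - W t)) *
        (- C * \<alpha> t * (b t x - W t) + \<alpha> t * (riccati t (b t x) - riccati t (W t)))) integrable_on {-pi..pi}"
      by (auto intro!: integrable_continuous_interval continuous_intros simp: riccati_def)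
  qed (use step_cutoff_transport_ge[OF C \<alpha>] in auto)
  finally show "(W t - e) * soft_measure \<alpha> W t \<le> \<dots>" .
qed

lemma soft_measure_le_2pi:
  assumes "t \<in> {0..<T}"
  shows "soft_measure \<alpha> W t \<le> 2 * pi"
proof -
  have "soft_measure \<alpha> W t \<le> integral {-pi..pi} (\<lambda>x. 1)"
    unfolding soft_measure_def using continuous_on_b[OF assms] step_cutoff_bounds(2)
    by (intro integral_le)
       (auto intro!: integrable_continuous_interval continuous_intros
         continuous_on_compose2[OF continuous_on_step_cutoff[of UNIV]])
  then show ?thesis by simp
qed

lemma soft_measure_ge_plateau:
  assumes a: "0 < a" "a \<le> pi" and plateau: "\<And>x. x \<in> {-a..a} \<Longrightarrow> b 0 x = W 0"
  shows "2 * a \<le> soft_measure \<alpha> W 0"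
proof -
  have "continuous_on {-pi..pi} (\<lambda>x. step_cutoff (\<alpha> 0 * (b 0 x - W 0)))"
    using continuous_on_b[of 0] T_pos
    by (intro continuous_on_compose2[OF continuous_on_step_cutoff[of UNIV]] continuous_intros) auto
  then have int: "(\<lambda>x. step_cutoff (\<alpha> 0 * (b 0 x - W 0))) integrable_on {-pi..pi}"
    by (rule integrable_continuous_interval)
  have "integral {-a..a} (\<lambda>x. 1) = integral {-a..a} (\<lambda>x. step_cutoff (\<alpha> 0 * (b 0 x - W 0)))"
    using plateau by (intro integral_cong) (simp add: step_cutoff_nonneg_arg)
  also have "\<dots> \<le> soft_measure \<alpha> W 0"
    unfolding soft_measure_def using a step_cutoff_bounds(1)
    by (intro integral_subset_le integrable_on_subinterval[OF int]) auto
  finally have "integral {-a..a} (\<lambda>x. 1) \<le> soft_measure \<alpha> W 0" .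
  then show ?thesis using a by simp
qed

lemma plateau_integral_bound_eps:
  assumes t1: "0 \<le> t1" "t1 < T"
    and dW: "\<And>t. t \<in> {0..t1} \<Longrightarrow> (W has_real_derivative riccati t (W t)) (at t within {0..t1})"
    and a: "0 < a" "a \<le> pi"
    and plateau: "\<And>x. x \<in> {-a..a} \<Longrightarrow> b 0 x = W 0"
    and e: "e > 0"
  shows "integral {0..t1} W - e * t1 \<le> ln (pi / a)"
proof -
  have cW: "continuous_on {0..t1} W" by (rule DERIV_continuous_on[OF dW])
  obtain C where C: "\<And>t x. t \<in> {0..t1} \<Longrightarrow> x \<in> {-pi..pi} \<Longrightarrow> \<bar>b t x\<bar> + \<bar>W t\<bar> + \<bar>memory t\<bar> \<le> C"
    using bounded_on_slab[OF t1 cW] by blast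
  have "0 \<le> C" using C[of 0 0] t1 by auto
  define \<alpha> where "\<alpha> t = exp (C * (t1 - t)) / e" for t
  have d\<alpha>: "(\<alpha> has_real_derivative - C * \<alpha> t) (at t within {0..t1})" for t
    unfolding \<alpha>_def[abs_def] using e by (auto intro!: derivative_eq_intros simp: field_simps)
  have \<alpha>: "0 < \<alpha> t" "1 / \<alpha> t \<le> e" if "t \<in> {0..t1}" for t
    using that e \<open>0 \<le> C\<close> by (auto simp: \<alpha>_def field_simps intro: mult_left_mono)
  define G where "G t = integral {0..t} W - e * t" for t
  have dG: "(G has_real_derivative W t - e) (at t within {0..t1})" if "t \<in> {0..t1}" for t
    unfolding G_def[abs_def] by (rule derivative_eq_intros integral_has_real_derivative[OF cW that] | simp)+
  have "soft_measure \<alpha> W 0 * exp (- G 0) \<le> soft_measure \<alpha> W t1 * exp (- G t1)"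
  proof (rule integrating_factor_mono[OF t1(1) dG soft_measure_growth[OF t1 _ dW _ d\<alpha> \<alpha>]])
    show "b t x + W t + memory t \<le> C" if "t \<in> {0..t1}" "x \<in> {-pi..pi}" for t x
      using C[OF that] abs_ge_self[of "b t x"] abs_ge_self[of "W t"] abs_ge_self[of "memory t"] by linarith
  qed
  then have "soft_measure \<alpha> W 0 \<le> soft_measure \<alpha> W t1 * exp (- G t1)" by (simp add: G_def)
  moreover have "2 * a \<le> soft_measure \<alpha> W 0" by (rule soft_measure_ge_plateau[where W=W, OF a plateau])
  moreover have "soft_measure \<alpha> W t1 \<le> 2 * pi" by (rule soft_measure_le_2pi) (use t1 in auto)
  ultimately have "2 * a \<le> 2 * pi * exp (- G t1)"
    by (meson exp_ge_zero mult_right_mono order.trans)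
  then have "exp (G t1) \<le> pi / a" using a by (simp add: exp_minus field_simps)
  then have "G t1 \<le> ln (pi / a)" using a by (simp add: ln_ge_iff)
  then show ?thesis unfolding G_def .
qed

lemma plateau_integral_bound:
  assumes t1: "0 \<le> t1" "t1 < T"
    and dW: "\<And>t. t \<in> {0..t1} \<Longrightarrow> (W has_real_derivative riccati t (W t)) (at t within {0..t1})"
    and a: "0 < a" "a \<le> pi"
    and plateau: "\<And>x. x \<in> {-a..a} \<Longrightarrow> b 0 x = W 0"
  shows "integral {0..t1} W \<le> ln (pi / a)"
proof (rule field_le_epsilon)
  fix e :: real assume "0 < e"
  then have "integral {0..t1} W - e / (t1 + 1) * t1 \<le> ln (pi / a)"
    using t1 by (intro plateau_integral_bound_eps[OF t1 dW a plateau]) auto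
  moreover have "e / (t1 + 1) * t1 \<le> e"
    using \<open>0 < e\<close> t1 by (simp add: field_simps)
  ultimately show "integral {0..t1} W \<le> ln (pi / a) + e" by linarith
qed

lemma cos_blowup_lower_bound:
  assumes "cos_blowup T b"
  obtains t2 where "0 \<le> t2" "t2 < T" "\<And>s. s \<in> {t2..<T} \<Longrightarrow> 1 / 2 / (T - s) \<le> b s 0"
proof -
  have "eventually (\<lambda>t. (T - t) * (SUP x\<in>{-pi..pi}. \<bar>b t x - cos x / (T - t)\<bar>) < 1/2) (at_left T)"
    using assms unfolding cos_blowup_def by (rule order_tendstoD(2)) simp
  then obtain t0 where t0: "t0 < T"
    "\<And>s. t0 < s \<Longrightarrow> s < T \<Longrightarrow> (T - s) * (SUP x\<in>{-pi..pi}. \<bar>b s x - cos x / (T - s)\<bar>) < 1/2"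
    unfolding eventually_at_left_field by blast
  define t2 where "t2 = (max 0 t0 + T) / 2"
  have t2: "0 \<le> t2" "t2 < T" "t0 < t2" using t0 T_pos unfolding t2_def by (auto simp: max_def)
  have lower: "1 / 2 / (T - s) \<le> b s 0" if s: "s \<in> {t2..<T}" for s
  proof -
    have "continuous_on {-pi..pi} (\<lambda>x. \<bar>b s x - cos x / (T - s)\<bar>)"
      using continuous_on_b[of s] s t2 by (intro continuous_intros) auto
    then have "bdd_above ((\<lambda>x. \<bar>b s x - cos x / (T - s)\<bar>) ` {-pi..pi})"
      by (intro bounded_imp_bdd_above compact_imp_bounded compact_continuous_image compact_Icc)
    then have "\<bar>b s 0 - cos 0 / (T - s)\<bar> \<le> (SUP x\<in>{-pi..pi}. \<bar>b s x - cos x / (T - s)\<bar>)"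
      by (intro cSUP_upper) auto
    then have "(T - s) * \<bar>b s 0 - 1 / (T - s)\<bar> \<le> (T - s) * (SUP x\<in>{-pi..pi}. \<bar>b s x - cos x / (T - s)\<bar>)"
      using s by (intro mult_left_mono) auto
    also have "\<dots> < 1/2" using t0(2)[of s] s t2 by auto
    finally have "(T - s) * \<bar>b s 0 - 1 / (T - s)\<bar> < 1/2" .
    moreover have "(T - s) * b s 0 - 1 = (T - s) * (b s 0 - 1 / (T - s))"
      using s by (simp add: field_simps)
    ultimately have "\<bar>(T - s) * b s 0 - 1\<bar> < 1/2"
      using s by (simp add: abs_mult)
    then have "1 / 2 < (T - s) * b s 0" by arith
    then show ?thesis using s by (simp add: field_simps)
  qed
  show ?thesis by (rule that[OF t2(1,2) lower])
qed

lemma riccati_sol_lower_bound_before_zero: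
  assumes \<tau>: "0 < \<tau>" "\<tau> < T" and zero: "psi c \<tau> = 0"
    and pos: "\<And>s. s \<in> {0..<\<tau>} \<Longrightarrow> psi c s > 0"
  obtains M U where "M > 0" "\<And>s. s \<in> {0..<\<tau>} \<Longrightarrow> 1 / M / (\<tau> - s) - U \<le> riccati_sol c s"
proof -
  have \<tau>': "0 \<le> \<tau>" using \<tau> by simp
  obtain U where U: "\<And>s. s \<in> {0..\<tau>} \<Longrightarrow> norm (b_left s) \<le> U"
    using continuous_on_compact_bound[OF compact_Icc continuous_on_b_left[OF \<tau>' \<tau>(2)]] by blast
  have "continuous_on {0..\<tau>} (\<lambda>s. - (2 * b_left s + memory s) * psi c s - 1)"
    using continuous_on_b_left[OF \<tau>' \<tau>(2)] continuous_on_memory[OF \<tau>' \<tau>(2)] continuous_on_psi[OF \<tau>' \<tau>(2)]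
    by (intro continuous_intros)
  then obtain M0 where M0: "M0 \<ge> 0" "\<And>s. s \<in> {0..\<tau>} \<Longrightarrow> norm (- (2 * b_left s + memory s) * psi c s - 1) \<le> M0"
    using continuous_on_compact_bound[OF compact_Icc] by blast
  define M where "M = M0 + 1"
  have M: "M > 0" "\<And>s. s \<in> {0..\<tau>} \<Longrightarrow> norm (- (2 * b_left s + memory s) * psi c s - 1) \<le> M"
    using M0 unfolding M_def by (auto intro: order_trans[OF _ less_imp_le[OF less_add_one]])
  have lower: "1 / M / (\<tau> - s) - U \<le> riccati_sol c s" if s: "s \<in> {0..<\<tau>}" for s
  proof -
    have "norm (psi c s - psi c \<tau>) \<le> M * norm (s - \<tau>)"
      using s M(2) psi_has_derivative[OF \<tau>' \<tau>(2)]
      by (intro field_differentiable_bound[where S="{0..\<tau>}"]) auto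
    then have "psi c s \<le> M * (\<tau> - s)" using zero s by simp
    then have "1 / (M * (\<tau> - s)) \<le> 1 / psi c s"
      using pos[OF s] by (intro divide_left_mono) auto
    moreover have "- U \<le> b_left s" using U[of s] s by auto
    ultimately show ?thesis unfolding riccati_sol_def by (simp add: field_simps)
  qed
  show ?thesis by (rule that[OF M(1) lower])
qed

lemma integral_riccati_sol_unbounded_if_psi_vanishes:
  assumes "c > 0" and ts: "0 \<le> ts" "ts < T" "psi c ts \<le> 0"
  shows "\<exists>t1\<in>{0..<T}. (\<forall>s\<in>{0..t1}. psi c s \<noteq> 0) \<and> integral {0..t1} (riccati_sol c) > L"
proof -
  obtain \<tau> where \<tau>: "0 < \<tau>" "\<tau> \<le> ts" "psi c \<tau> = 0" and pos: "\<And>s. s \<in> {0..<\<tau>} \<Longrightarrow> psi c s > 0"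
    by (rule first_zero[OF ts(1) continuous_on_psi[OF ts(1,2)]]) (use psi_0 \<open>c > 0\<close> ts(3) in auto)
  have \<tau>T: "\<tau> < T" using \<tau> ts by linarith
  have nz: "\<forall>s\<in>{0..t1}. psi c s \<noteq> 0" if "t1 \<in> {0..<\<tau>}" for t1
  proof
    fix s assume "s \<in> {0..t1}"
    with that pos[of s] show "psi c s \<noteq> 0" by auto
  qed
  obtain M U where "M > 0" and lower: "\<And>s. s \<in> {0..<\<tau>} \<Longrightarrow> 1 / M / (\<tau> - s) - U \<le> riccati_sol c s"
    using riccati_sol_lower_bound_before_zero[OF \<tau>(1) \<tau>T \<tau>(3) pos] by metis
  have "continuous_on {0..t1} (riccati_sol c)" if "t1 \<in> {0..<\<tau>}" for t1
    using that \<tau>T nz[OF that] by (intro continuous_on_riccati_sol) auto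
  with \<open>M > 0\<close> have "\<exists>t1\<in>{0..<\<tau>}. integral {0..t1} (riccati_sol c) > L"
    by (intro integral_unbounded_near_pole[OF order_refl \<tau>(1) _ _ lower]) auto
  then obtain t1 where t1: "t1 \<in> {0..<\<tau>}" and "integral {0..t1} (riccati_sol c) > L" by blast
  moreover have "t1 \<in> {0..<T}" using t1 \<tau>T by auto
  ultimately show ?thesis using nz by blast
qed

lemma integral_riccati_sol_unbounded_if_blowup:
  assumes blowup: "cos_blowup T b"
    and init: "\<And>x. x \<in> {-pi..pi} \<Longrightarrow> b 0 x \<le> riccati_sol c 0"
    and pos: "\<And>t. t \<in> {0..<T} \<Longrightarrow> psi c t \<noteq> 0"
  shows "\<exists>t1\<in>{0..<T}. (\<forall>s\<in>{0..t1}. psi c s \<noteq> 0) \<and> integral {0..t1} (riccati_sol c) > L"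
proof -
  have nz: "\<forall>s\<in>{0..t1}. psi c s \<noteq> 0" if "t1 \<in> {0..<T}" for t1
  proof
    fix s assume "s \<in> {0..t1}"
    with that pos[of s] show "psi c s \<noteq> 0" by auto
  qed
  obtain t2 where t2: "0 \<le> t2" "t2 < T" and lower: "\<And>s. s \<in> {t2..<T} \<Longrightarrow> 1 / 2 / (T - s) \<le> b s 0"
    using cos_blowup_lower_bound[OF blowup] by metis
  have lower_W: "1 / 2 / (T - s) - 0 \<le> riccati_sol c s" if s: "s \<in> {t2..<T}" for s
  proof -
    have s': "0 \<le> s" "s < T" and "s \<in> {0..<T}" using s t2 by auto
    have "b s 0 \<le> riccati_sol c s"
      by (rule comparison_principle[OF s' riccati_sol_has_derivative[OF s']])
         (use nz[OF \<open>s \<in> {0..<T}\<close>] init in auto)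
    with lower[OF s] show ?thesis by simp
  qed
  have "continuous_on {0..t1} (riccati_sol c)" if "t1 \<in> {0..<T}" for t1
    using that nz[OF that] by (intro continuous_on_riccati_sol) auto
  then have "\<exists>t1\<in>{t2..<T}. integral {0..t1} (riccati_sol c) > L"
    by (intro integral_unbounded_near_pole[OF t2 _ _ lower_W]) auto
  then obtain t1 where t1: "t1 \<in> {t2..<T}" and "integral {0..t1} (riccati_sol c) > L" by blast
  moreover have "t1 \<in> {0..<T}" using t1 t2 by auto
  ultimately show ?thesis using nz by blast
qed

lemma no_cos_blowup:
  assumes a: "0 < a" "a \<le> pi"
    and plateau: "\<And>x. x \<in> {-a..a} \<Longrightarrow> b 0 x = m"
    and le_max: "\<And>x. x \<in> {-pi..pi} \<Longrightarrow> b 0 x \<le> m"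
    and left_lt: "b 0 (-pi) < m"
  shows "\<not> cos_blowup T b"
proof
  assume blowup: "cos_blowup T b"
  define c where "c = 1 / (m - b 0 (-pi))"
  have "c > 0" using left_lt by (simp add: c_def)
  have W0: "riccati_sol c 0 = m" using riccati_sol_0[of c] left_lt by (simp add: c_def)
  obtain t1 where t1: "t1 \<in> {0..<T}" and nz: "\<forall>s\<in>{0..t1}. psi c s \<noteq> 0"
    and big: "integral {0..t1} (riccati_sol c) > ln (pi / a)"
  proof (cases "\<exists>t\<in>{0..<T}. psi c t \<le> 0")
    case True
    then obtain ts where "0 \<le> ts" "ts < T" "psi c ts \<le> 0" by auto
    from integral_riccati_sol_unbounded_if_psi_vanishes[OF \<open>c > 0\<close> this] that show ?thesis by blast
  next
    case False
    then have "psi c t \<noteq> 0" if "t \<in> {0..<T}" for t using that by force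
    moreover have "b 0 x \<le> riccati_sol c 0" if "x \<in> {-pi..pi}" for x using le_max[OF that] W0 by simp
    ultimately show ?thesis
      using integral_riccati_sol_unbounded_if_blowup[OF blowup] that by blast
  qed
  have "integral {0..t1} (riccati_sol c) \<le> ln (pi / a)"
    using t1 nz plateau W0 riccati_sol_has_derivative
    by (intro plateau_integral_bound[OF _ _ _ a]) auto
  with big show False by linarith
qed

end

lemma not_cos_blowup_of_flat_top:
  assumes sol: "is_solution T b0 b" and "T > 0"
    and a: "0 < a" "a \<le> pi"
    and "\<And>x. x \<in> {-a..a} \<Longrightarrow> b0 x = m" "\<And>x. x \<in> {-pi..pi} \<Longrightarrow> b0 x \<le> m" "b0 (-pi) < m"
  shows "\<not> cos_blowup T b"
proof -
  from sol obtain bt bx where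
    c: "continuous_on ({0..<T} \<times> {-pi..pi}) (\<lambda>(t,x). b t x)"
      "continuous_on ({0..<T} \<times> {-pi..pi}) (\<lambda>(t,x). bt t x)"
      "continuous_on ({0..<T} \<times> {-pi..pi}) (\<lambda>(t,x). bx t x)" and
    eq: "\<forall>t\<in>{0..<T}. \<forall>x\<in>{-pi..pi}.
      ((\<lambda>s. b s x) has_real_derivative bt t x) (at t within {0..<T}) \<and>
      ((\<lambda>y. b t y) has_real_derivative bx t x) (at x within {-pi..pi}) \<and>
      bt t x + integral {-pi..x} (b t) * bx t x - (b t x)\<^sup>2 + (1/pi) * integral {-pi..pi} (\<lambda>y. (b t y)\<^sup>2)
        = (1/pi) * integral {0..t} (\<lambda>s. integral {-pi..pi} (\<lambda>y. (b s y)\<^sup>2)) * b t x" and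
    mf: "\<forall>t\<in>{0..<T}. integral {-pi..pi} (b t) = 0" and
    init: "\<forall>x\<in>{-pi..pi}. b 0 x = b0 x"
    unfolding is_solution_def by blast
  interpret mean_free_solution T b bt bx
    by (rule mean_free_solution.intro) (use \<open>T > 0\<close> c eq mf in auto)
  show ?thesis
    by (rule no_cos_blowup[OF a]) (use assms init a pi_gt3 in auto)
qed

section \<open>The flat-top datum\<close>

definition flat_cos :: "real \<Rightarrow> real \<Rightarrow> real" where
  "flat_cos a x = cos (x - max (-a) (min a x))"

lemma flat_cos_has_derivative:
  assumes a: "0 < a"
  shows "(flat_cos a has_real_derivative - sin (x - max (-a) (min a x))) (at x)"
proof -
  have "(flat_cos a has_real_derivative
      (if x \<le> -a then - sin (x + a) else if x \<le> a then 0 else - sin (x - a))) (at x)"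
    by (rule has_real_derivative_piecewise[where gl="\<lambda>y. cos (y + a)" and gm="\<lambda>_. 1" and gr="\<lambda>y. cos (y - a)"])
       (use a in \<open>auto simp: flat_cos_def intro!: derivative_eq_intros\<close>)
  moreover have "(if x \<le> -a then - sin (x + a) else if x \<le> a then 0 else - sin (x - a))
      = - sin (x - max (-a) (min a x))"
    using a by (auto simp: max_def min_def)
  ultimately show ?thesis by simp
qed

lemma abs_flat_cos_minus_cos:
  assumes "0 \<le> a"
  shows "\<bar>flat_cos a x - cos x\<bar> \<le> a"
proof -
  have "\<bar>max (-a) (min a x)\<bar> \<le> a" using assms by auto
  then show ?thesis
    using abs_cos_diff_le[of "x - max (-a) (min a x)" x] by (simp add: flat_cos_def)
qed

definition flat_datum :: "real \<Rightarrow> real \<Rightarrow> real \<Rightarrow> real" where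
  "flat_datum \<mu> a x = \<mu> * (flat_cos a x - integral {-pi..pi} (flat_cos a) / (2 * pi))"

lemma integral_flat_datum:
  assumes "0 < a"
  shows "integral {-pi..pi} (flat_datum \<mu> a) = 0"
proof -
  have "continuous_on {-pi..pi} (flat_cos a)"
    using flat_cos_has_derivative[OF assms]
    by (intro DERIV_continuous_on) (auto intro: has_field_derivative_at_within)
  then have "flat_cos a integrable_on {-pi..pi}" by (rule integrable_continuous_interval)
  then have "integral {-pi..pi} (\<lambda>x. flat_cos a x - integral {-pi..pi} (flat_cos a) / (2 * pi)) = 0"
    by (simp add: integral_diff[OF _ integrable_const_ivl])
  then show ?thesis by (simp add: flat_datum_def[abs_def])
qed

lemma abs_mean_flat_cos_le:
  assumes "0 \<le> a"
  shows "\<bar>integral {-pi..pi} (flat_cos a) / (2 * pi)\<bar> \<le> a"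
proof -
  have "(cos has_integral (sin pi - sin (-pi))) {-pi..pi}"
    by (rule fundamental_theorem_of_calculus)
       (auto intro!: derivative_eq_intros simp: has_real_derivative_iff_has_vector_derivative[symmetric])
  then have cos: "(cos has_integral 0) {-pi..pi}" by simp
  have "continuous_on {-pi..pi} (flat_cos a)"
    unfolding flat_cos_def by (intro continuous_intros)
  then have int: "(\<lambda>x. flat_cos a x - cos x) integrable_on {-pi..pi}"
    using integrable_diff[OF integrable_continuous_interval has_integral_integrable[OF cos]] by blast
  have "integral {-pi..pi} (flat_cos a) = integral {-pi..pi} (\<lambda>x. flat_cos a x - cos x)"
    using integral_diff[OF integrable_continuous_interval[OF \<open>continuous_on _ _\<close>] has_integral_integrable[OF cos]]
      integral_unique[OF cos] by simp
  also have "\<bar>\<dots>\<bar> \<le> integral {-pi..pi} (\<lambda>x. a)"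
    using integral_norm_bound_integral[OF int integrable_const_ivl, of a] abs_flat_cos_minus_cos[OF assms]
    by simp
  finally show ?thesis by (simp add: field_simps)
qed

lemma abs_sin_sub_clamp_le:
  fixes a x :: real
  assumes "0 \<le> a"
  shows "\<bar>sin x - sin (x - max (-a) (min a x))\<bar> \<le> a"
proof -
  have "\<bar>max (-a) (min a x)\<bar> \<le> a" using assms by auto
  with abs_sin_diff_le[of x "x - max (-a) (min a x)"] show ?thesis by simp
qed

lemma abs_sin_sub_clamp_diff_le:
  fixes a x y :: real
  assumes "0 \<le> a"
  shows "\<bar>(sin x - sin (x - max (-a) (min a x))) - (sin y - sin (y - max (-a) (min a y)))\<bar> \<le> 2 * \<bar>x - y\<bar>"
proof -
  let ?x = "x - max (-a) (min a x)" and ?y = "y - max (-a) (min a y)"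
  have "\<bar>?x - ?y\<bar> \<le> \<bar>x - y\<bar>"
    using assms by (auto simp: max_def min_def abs_if)
  then have "\<bar>sin x - sin y\<bar> + \<bar>sin ?x - sin ?y\<bar> \<le> 2 * \<bar>x - y\<bar>"
    using abs_sin_diff_le[of x y] abs_sin_diff_le[of ?x ?y] by linarith
  then show ?thesis
    using abs_triangle_ineq4[of "sin x - sin y" "sin ?x - sin ?y"] by (simp add: algebra_simps)
qed

lemma holder_norm_le_flat_datum:
  assumes "0 < \<epsilon>" "0 < a" "0 \<le> \<mu>"
  shows "holder_norm_le (2 - \<epsilon>) (\<lambda>x. flat_datum \<mu> a x - \<mu> * cos x) (2 * \<mu> * (3 * a + 2 * a powr \<epsilon>))"
proof (rule holder_norm_le_of_derivative_bounds[where h'="\<lambda>x. \<mu> * (sin x - sin (x - max (-a) (min a x)))"])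
  show "((\<lambda>x. flat_datum \<mu> a x - \<mu> * cos x) has_real_derivative
      \<mu> * (sin x - sin (x - max (-a) (min a x)))) (at x)" for x
  proof -
    have "((\<lambda>x. flat_datum \<mu> a x - \<mu> * cos x)
        has_real_derivative \<mu> * (- sin (x - max (-a) (min a x)) - 0) - \<mu> * - sin x) (at x)"
      unfolding flat_datum_def
      by (intro DERIV_diff DERIV_cmult flat_cos_has_derivative[OF \<open>0 < a\<close>] DERIV_const DERIV_cos)
    then show ?thesis by (simp add: algebra_simps)
  qed
  show "\<bar>flat_datum \<mu> a x - \<mu> * cos x\<bar> \<le> 2 * \<mu> * a" for x
  proof -
    have "flat_datum \<mu> a x - \<mu> * cos x =
        \<mu> * ((flat_cos a x - cos x) - integral {-pi..pi} (flat_cos a) / (2 * pi))"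
      by (simp add: flat_datum_def algebra_simps)
    also have "\<bar>\<dots>\<bar> \<le> \<mu> * (\<bar>flat_cos a x - cos x\<bar> + \<bar>integral {-pi..pi} (flat_cos a) / (2 * pi)\<bar>)"
      unfolding abs_mult abs_of_nonneg[OF \<open>0 \<le> \<mu>\<close>]
      by (rule mult_left_mono[OF abs_triangle_ineq4 \<open>0 \<le> \<mu>\<close>])
    also have "\<dots> \<le> \<mu> * (a + a)"
      using abs_flat_cos_minus_cos[of a x] abs_mean_flat_cos_le[of a] assms
      by (intro mult_left_mono add_mono) auto
    finally show ?thesis by simp
  qed
  show "\<bar>\<mu> * (sin x - sin (x - max (-a) (min a x)))\<bar> \<le> 2 * \<mu> * a" for x
  proof -
    have "\<bar>\<mu> * (sin x - sin (x - max (-a) (min a x)))\<bar> = \<mu> * \<bar>sin x - sin (x - max (-a) (min a x))\<bar>"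
      using assms by (simp add: abs_mult)
    also have "\<dots> \<le> \<mu> * a" by (rule mult_left_mono[OF abs_sin_sub_clamp_le]) (use assms in auto)
    also have "\<dots> \<le> 2 * \<mu> * a" using assms by simp
    finally show ?thesis .
  qed
  show "\<bar>\<mu> * (sin x - sin (x - max (-a) (min a x))) - \<mu> * (sin y - sin (y - max (-a) (min a y)))\<bar>
      \<le> 2 * \<mu> * \<bar>x - y\<bar>" for x y
    using mult_left_mono[OF abs_sin_sub_clamp_diff_le[of a x y], of \<mu>] assms
    by (simp add: abs_mult right_diff_distrib[symmetric])
qed (use assms in auto)

lemma flat_datum_flat_top:
  assumes "0 < \<mu>" "0 < a" "a < pi"
  shows "\<And>x. x \<in> {-a..a} \<Longrightarrow> flat_datum \<mu> a x = flat_datum \<mu> a 0"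
    and "\<And>x. flat_datum \<mu> a x \<le> flat_datum \<mu> a 0"
    and "flat_datum \<mu> a (-pi) < flat_datum \<mu> a 0"
proof -
  show "flat_datum \<mu> a x = flat_datum \<mu> a 0" if "x \<in> {-a..a}" for x
    using that assms by (simp add: flat_datum_def flat_cos_def)
  show "flat_datum \<mu> a x \<le> flat_datum \<mu> a 0" for x
    using assms by (simp add: flat_datum_def flat_cos_def)
  have "cos (pi - a) < cos 0"
    using assms by (intro cos_monotone_0_pi) auto
  then have "cos (a - pi) < 1"
    by (metis cos_minus cos_zero minus_diff_eq)
  then show "flat_datum \<mu> a (-pi) < flat_datum \<mu> a 0"
    using assms by (simp add: flat_datum_def flat_cos_def)
qed

lemma not_cos_blowup_flat_datum:
  assumes "0 < \<mu>" "0 < a" "a < pi" and sol: "is_solution T (flat_datum \<mu> a) b" "T > 0"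
  shows "\<not> cos_blowup T b"
proof (rule not_cos_blowup_of_flat_top[OF sol \<open>0 < a\<close>])
  note flat_top = flat_datum_flat_top[OF assms(1-3)]
  show "a \<le> pi" using \<open>a < pi\<close> by (rule less_imp_le)
  show "flat_datum \<mu> a x = flat_datum \<mu> a 0" if "x \<in> {-a..a}" for x by (rule flat_top(1)[OF that])
  show "flat_datum \<mu> a x \<le> flat_datum \<mu> a 0" for x by (rule flat_top(2))
  show "flat_datum \<mu> a (-pi) < flat_datum \<mu> a 0" by (rule flat_top(3))
qed

lemma exists_small_width:
  fixes \<epsilon> \<delta> \<mu> :: real
  assumes "0 < \<epsilon>" "0 < \<delta>" "0 < \<mu>"
  obtains a where "0 < a" "a < pi" "2 * \<mu> * (3 * a + 2 * a powr \<epsilon>) \<le> \<delta> * \<mu>"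
proof -
  define a where "a = min 1 (min (\<delta> / 12) ((\<delta> / 8) powr (1 / \<epsilon>)))"
  have a: "0 < a" "a < pi" "a \<le> \<delta> / 12" using assms pi_gt3 by (auto simp: a_def)
  have "a powr \<epsilon> \<le> ((\<delta> / 8) powr (1 / \<epsilon>)) powr \<epsilon>"
    using a assms by (intro powr_mono2) (auto simp: a_def)
  then have "a powr \<epsilon> \<le> \<delta> / 8" using assms by (simp add: powr_powr)
  with a have "3 * a + 2 * a powr \<epsilon> \<le> \<delta> / 2" by linarith
  from mult_left_mono[OF this, of "2 * \<mu>"] assms
  have "2 * \<mu> * (3 * a + 2 * a powr \<epsilon>) \<le> \<delta> * \<mu>" by simp
  with a show ?thesis using that by blast
qed

theorem theorem1p2:
  fixes \<epsilon> \<delta> \<mu> :: real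
  assumes "\<epsilon> > 0" and "\<delta> > 0" and "\<mu> > 0"
  shows "\<exists>b0 :: real \<Rightarrow> real.
           integral {-pi..pi} b0 = 0 \<and>
           holder_norm_le (2 - \<epsilon>) (\<lambda>x. b0 x - \<mu> * cos x) (\<delta> * \<mu>) \<and>
           \<not> (\<exists>T > 0. \<exists>b. is_solution T b0 b \<and> cos_blowup T b)"
proof -
  obtain a where a: "0 < a" "a < pi" and small: "2 * \<mu> * (3 * a + 2 * a powr \<epsilon>) \<le> \<delta> * \<mu>"
    using exists_small_width[OF assms] by blast
  show ?thesis
  proof (intro exI[of _ "flat_datum \<mu> a"] conjI notI)
    show "integral {-pi..pi} (flat_datum \<mu> a) = 0" by (rule integral_flat_datum[OF a(1)])
    show "holder_norm_le (2 - \<epsilon>) (\<lambda>x. flat_datum \<mu> a x - \<mu> * cos x) (\<delta> * \<mu>)"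
      by (rule holder_norm_le_mono[OF holder_norm_le_flat_datum small]) (use assms a in auto)
  next
    assume "\<exists>T > 0. \<exists>b. is_solution T (flat_datum \<mu> a) b \<and> cos_blowup T b"
    then show False using not_cos_blowup_flat_datum[OF \<open>\<mu> > 0\<close> a] by blast
  qed
qed

end
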